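(* Consider $N$ agents $\mathcal{V}=\{1,\dots,N\}$ interacting over a fixed graph in which agent $i$ has the nonempty neighbor set $\mathcal{N}_i$ of cardinality $n_i$. Let $\beta\in[0,1]$ and let $(q_p(k))_{k\ge0}$ be a sequence with values in $\{-1,1\}$. The opinions evolve by $$\theta_i(k+1)=\theta_i(k)+\bigl(1-\theta_i(k)^2\bigr)\Bigl[\beta\bigl(q_p(k)-\theta_i(k)\bigr)+(1-\beta)\frac{1}{n_i}\sum_{j\in\mathcal{N}_i}\bigl(q_j(k)-\theta_i(k)\bigr)\Bigr],$$ with actions $q_j(k)=1$ if $\theta_j(k)>0$ or ($\theta_j(k)=0$ and $q_j(k-1)=1$), and $q_j(k)=-1$ if $\theta_j(k)<0$ or ($\theta_j(k)=0$ and $q_j(k-1)=-1$). Let $f_i(k)=(1-\beta)\frac{n_i^+(k)-n_i^-(k)}{n_i}+\beta q_p(k)$, where $n_i^{\pm}(k)=|\{j\in\mathcal{N}_i:q_j(k)=\pm1\}|$. Let $i\in\mathcal{V}$ with $\theta_i(0)\in(-1,1)$. Then for every $k$: 1. if $f_i(k)\ge 0$ and $q_i(k)=1$, then $q_i(k+1)=1$; 2. if $f_i(k)\le 0$ and $q_i(k)=-1$, then $q_i(k+1)=-1$.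
   Context: Opinions take values in $[-1,1]$. The neighbor set $\mathcal{N}_i$ consists of the agents $j$ with $(j,i)$ an edge of the graph. *)

theory Defs
  imports Complex_Main
begin

definition n_plus :: "(nat \<Rightarrow> nat set) \<Rightarrow> (nat \<Rightarrow> nat \<Rightarrow> real) \<Rightarrow> nat \<Rightarrow> nat \<Rightarrow> nat" where
  "n_plus Nb q i k = card {j \<in> Nb i. q j k = 1}"

definition n_minus :: "(nat \<Rightarrow> nat set) \<Rightarrow> (nat \<Rightarrow> nat \<Rightarrow> real) \<Rightarrow> nat \<Rightarrow> nat \<Rightarrow> nat" where
  "n_minus Nb q i k = card {j \<in> Nb i. q j k = -1}"

definition f_drive :: "real \<Rightarrow> (nat \<Rightarrow> real) \<Rightarrow> (nat \<Rightarrow> nat set) \<Rightarrow> (nat \<Rightarrow> nat \<Rightarrow> real) \<Rightarrow> nat \<Rightarrow> nat \<Rightarrow> real" where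
  "f_drive \<beta> qp Nb q i k =
     (1 - \<beta>) * ((real (n_plus Nb q i k) - real (n_minus Nb q i k)) / real (card (Nb i))) + \<beta> * qp k"

end

theory Submission
  imports Defs
begin

(* Since the neighbour actions are +1 or -1, the update collapses to
   theta(k+1) = theta(k)^3 + (1 - theta(k)^2) f_i(k) with |f_i(k)| <= 1.
   This map keeps [-1,1] invariant, and on it theta(k)^3 has the sign of theta(k) while
   1 - theta(k)^2 >= 0, so theta(k+1) has the common sign of theta(k) and f_i(k).
   An opinion that does not change sign cannot change the action, since at 0 the previous
   action is kept. *)

lemma sum_signs_eq_card_diff:
  fixes g :: "'a \<Rightarrow> real"
  assumes "finite A" and "\<And>l. l \<in> A \<Longrightarrow> g l \<in> {-1, 1}"
  shows "(\<Sum>l\<in>A. g l) = real (card {l \<in> A. g l = 1}) - real (card {l \<in> A. g l = -1})"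
proof -
  have "(\<Sum>l\<in>A. g l) = (\<Sum>l\<in>A. (if g l = 1 then 1 else 0) - (if g l = -1 then 1 else 0))"
    by (rule sum.cong) (use assms(2) in auto)
  also have "\<dots> = real (card {l \<in> A. g l = 1}) - real (card {l \<in> A. g l = -1})"
    using assms(1) by (simp add: sum_subtractf sum.If_cases Collect_conj_eq Int_commute)
  finally show ?thesis .
qed

lemma abs_mean_signs_le_1:
  fixes g :: "'a \<Rightarrow> real"
  assumes "\<And>l. l \<in> A \<Longrightarrow> g l \<in> {-1, 1}"
  shows "\<bar>(\<Sum>l\<in>A. g l) / real (card A)\<bar> \<le> 1"
proof -
  have "\<bar>\<Sum>l\<in>A. g l\<bar> \<le> (\<Sum>l\<in>A. \<bar>g l\<bar>)"
    by (rule sum_abs)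
  also have "\<dots> \<le> real (card A)"
    using sum_bounded_above[of A "\<lambda>l. \<bar>g l\<bar>" 1] assms by fastforce
  finally show ?thesis
    by (cases "card A = 0") (simp_all add: divide_le_eq_1)
qed

lemma abs_convex_combination_le_1:
  fixes a b \<beta> :: real
  assumes "\<bar>a\<bar> \<le> 1" "\<bar>b\<bar> \<le> 1" "0 \<le> \<beta>" "\<beta> \<le> 1"
  shows "\<bar>(1 - \<beta>) * a + \<beta> * b\<bar> \<le> 1"
proof -
  have "\<bar>(1 - \<beta>) * a\<bar> \<le> 1 - \<beta>" and "\<bar>\<beta> * b\<bar> \<le> \<beta>"
    using assms by (simp_all add: abs_mult mult_left_le)
  then show ?thesis
    by linarith
qed

lemma f_drive_eq_mean:
  assumes "finite (Nb i)" and "\<And>l. l \<in> Nb i \<Longrightarrow> q l k \<in> {-1, 1}"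
  shows "f_drive \<beta> qp Nb q i k
           = (1 - \<beta>) * ((\<Sum>l\<in>Nb i. q l k) / real (card (Nb i))) + \<beta> * qp k"
  using sum_signs_eq_card_diff[OF assms] by (simp add: f_drive_def n_plus_def n_minus_def)

lemma abs_f_drive_le_1:
  assumes "finite (Nb i)" and "\<And>l. l \<in> Nb i \<Longrightarrow> q l k \<in> {-1, 1}"
    and "0 \<le> \<beta>" "\<beta> \<le> 1" and "qp k \<in> {-1, 1}"
  shows "\<bar>f_drive \<beta> qp Nb q i k\<bar> \<le> 1"
proof -
  have mean: "f_drive \<beta> qp Nb q i k
                = (1 - \<beta>) * ((\<Sum>l\<in>Nb i. q l k) / real (card (Nb i))) + \<beta> * qp k"
    using assms(1,2) by (rule f_drive_eq_mean)
  have "\<bar>(\<Sum>l\<in>Nb i. q l k) / real (card (Nb i))\<bar> \<le> 1"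
    using abs_mean_signs_le_1[of "Nb i" "\<lambda>l. q l k"] assms(2) by blast
  moreover have "\<bar>qp k\<bar> \<le> 1"
    using assms(5) by auto
  ultimately show ?thesis
    unfolding mean using assms(3,4) by (rule abs_convex_combination_le_1)
qed

lemma opinion_update_eq_cubic:
  fixes t \<beta> p :: real and g :: "'a \<Rightarrow> real"
  assumes "finite A" and "A \<noteq> {}"
  shows "t + (1 - t\<^sup>2) * (\<beta> * (p - t) + (1 - \<beta>) * (1 / real (card A)) * (\<Sum>l\<in>A. g l - t))
           = t ^ 3 + (1 - t\<^sup>2) * ((1 - \<beta>) * ((\<Sum>l\<in>A. g l) / real (card A)) + \<beta> * p)"
proof -
  have "card A > 0"
    using assms by (simp add: card_gt_0_iff)
  then have "(1 - \<beta>) * (1 / real (card A)) * (\<Sum>l\<in>A. g l - t)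
             = (1 - \<beta>) * ((\<Sum>l\<in>A. g l) / real (card A) - t)"
    by (simp add: sum_subtractf field_simps)
  moreover have "t + (1 - t\<^sup>2) * (\<beta> * (p - t) + (1 - \<beta>) * (m - t))
                   = t ^ 3 + (1 - t\<^sup>2) * ((1 - \<beta>) * m + \<beta> * p)" for m
    by (simp add: algebra_simps power2_eq_square power3_eq_cube)
  ultimately show ?thesis
    by simp
qed

lemma opinion_update_eq_cubic_f_drive:
  assumes "finite (Nb i)" and "Nb i \<noteq> {}" and "\<And>l. l \<in> Nb i \<Longrightarrow> q l k \<in> {-1, 1}"
  shows "t + (1 - t\<^sup>2) * (\<beta> * (qp k - t)
             + (1 - \<beta>) * (1 / real (card (Nb i))) * (\<Sum>l\<in>Nb i. q l k - t))
           = t ^ 3 + (1 - t\<^sup>2) * f_drive \<beta> qp Nb q i k"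
proof -
  have "f_drive \<beta> qp Nb q i k
          = (1 - \<beta>) * ((\<Sum>l\<in>Nb i. q l k) / real (card (Nb i))) + \<beta> * qp k"
    using assms(1,3) by (rule f_drive_eq_mean)
  then show ?thesis
    by (simp only: opinion_update_eq_cubic[OF assms(1,2)])
qed

lemma abs_cubic_update_le_1:
  fixes t f :: real
  assumes "\<bar>t\<bar> \<le> 1" and "\<bar>f\<bar> \<le> 1"
  shows "\<bar>t ^ 3 + (1 - t\<^sup>2) * f\<bar> \<le> 1"
proof -
  have t2: "0 \<le> t\<^sup>2" "t\<^sup>2 \<le> 1"
    using assms(1) by (simp_all add: abs_square_le_1)
  have "\<bar>t ^ 3\<bar> \<le> t\<^sup>2"
    using assms(1) t2 by (simp add: power3_eq_cube power2_eq_square abs_mult mult_left_le)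
  moreover have "\<bar>(1 - t\<^sup>2) * f\<bar> \<le> 1 - t\<^sup>2"
    using assms(2) t2 by (simp add: abs_mult mult_left_le)
  ultimately show ?thesis
    by linarith
qed

lemma cubic_update_nonneg:
  fixes t f :: real
  assumes "\<bar>t\<bar> \<le> 1" and "0 \<le> t" and "0 \<le> f"
  shows "0 \<le> t ^ 3 + (1 - t\<^sup>2) * f"
  using assms by (simp add: abs_square_le_1)

lemma cubic_update_nonpos:
  fixes t f :: real
  assumes "\<bar>t\<bar> \<le> 1" and "t \<le> 0" and "f \<le> 0"
  shows "t ^ 3 + (1 - t\<^sup>2) * f \<le> 0"
  using cubic_update_nonneg[of "- t" "- f"] assms by simp

theorem mainTheorem3:
  fixes N :: nat and Nb :: "nat \<Rightarrow> nat set" and \<beta> :: real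
    and qp :: "nat \<Rightarrow> real" and \<theta> q :: "nat \<Rightarrow> nat \<Rightarrow> real" and i :: nat
  assumes nbhd: "\<And>j. j \<in> {1..N} \<Longrightarrow> Nb j \<subseteq> {1..N} \<and> Nb j \<noteq> {}"
    and beta: "0 \<le> \<beta>" "\<beta> \<le> 1"
    and qp: "\<And>k. qp k \<in> {-1, 1}"
    and init: "\<And>j. j \<in> {1..N} \<Longrightarrow> \<theta> j 0 \<in> {-1..1}"
    and dyn: "\<And>j k. j \<in> {1..N} \<Longrightarrow>
       \<theta> j (Suc k) = \<theta> j k + (1 - (\<theta> j k)\<^sup>2) *
         (\<beta> * (qp k - \<theta> j k)
          + (1 - \<beta>) * (1 / real (card (Nb j))) * (\<Sum>l\<in>Nb j. q l k - \<theta> j k))"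
    and qvals: "\<And>j k. j \<in> {1..N} \<Longrightarrow> q j k \<in> {-1, 1}"
    and qpos: "\<And>j k. j \<in> {1..N} \<Longrightarrow> \<theta> j k > 0 \<Longrightarrow> q j k = 1"
    and qneg: "\<And>j k. j \<in> {1..N} \<Longrightarrow> \<theta> j k < 0 \<Longrightarrow> q j k = -1"
    and qzero: "\<And>j k. j \<in> {1..N} \<Longrightarrow> \<theta> j (Suc k) = 0 \<Longrightarrow> q j (Suc k) = q j k"
    and iV: "i \<in> {1..N}"
    and thi0: "\<theta> i 0 \<in> {-1<..<1}"
  shows "\<forall>k. (f_drive \<beta> qp Nb q i k \<ge> 0 \<and> q i k = 1 \<longrightarrow> q i (Suc k) = 1)
           \<and> (f_drive \<beta> qp Nb q i k \<le> 0 \<and> q i k = -1 \<longrightarrow> q i (Suc k) = -1)"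
proof -
  have fin: "finite (Nb i)" and nonempty: "Nb i \<noteq> {}"
    using nbhd[OF iV] finite_subset[of "Nb i" "{1..N}"] by auto
  have q_nbhd: "\<And>l k. l \<in> Nb i \<Longrightarrow> q l k \<in> {-1, 1}"
    using nbhd[OF iV] qvals by blast
  have f_bound: "\<bar>f_drive \<beta> qp Nb q i k\<bar> \<le> 1" for k
    using fin q_nbhd beta qp by (rule abs_f_drive_le_1)
  have step: "\<theta> i (Suc k) = (\<theta> i k) ^ 3 + (1 - (\<theta> i k)\<^sup>2) * f_drive \<beta> qp Nb q i k" for k
    unfolding dyn[OF iV] using fin nonempty q_nbhd by (rule opinion_update_eq_cubic_f_drive)
  \<comment> \<open>The closed-interval hypothesis init suffices here.\<close>
  have bounded: "\<bar>\<theta> i k\<bar> \<le> 1" for k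
    by (induction k) (use init[OF iV] in \<open>auto simp: step abs_cubic_update_le_1 f_bound\<close>)
  show ?thesis
  proof (intro allI conjI impI)
    fix k
    assume hyp: "f_drive \<beta> qp Nb q i k \<ge> 0 \<and> q i k = 1"
    then have "\<theta> i k \<ge> 0"
      using qneg[OF iV, of k] by force
    then have "\<theta> i (Suc k) \<ge> 0"
      unfolding step using hyp by (intro cubic_update_nonneg[OF bounded]) auto
    then show "q i (Suc k) = 1"
      using qpos[OF iV] qzero[OF iV, of k] hyp by (cases "\<theta> i (Suc k) = 0") auto
  next
    fix k
    assume hyp: "f_drive \<beta> qp Nb q i k \<le> 0 \<and> q i k = -1"
    then have "\<theta> i k \<le> 0"
      using qpos[OF iV, of k] by force
    then have "\<theta> i (Suc k) \<le> 0"
      unfolding step using hyp by (intro cubic_update_nonpos[OF bounded]) auto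
    then show "q i (Suc k) = -1"
      using qneg[OF iV] qzero[OF iV, of k] hyp by (cases "\<theta> i (Suc k) = 0") auto
  qed
qed

end
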